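(* Let $(I_t)_{t\in\mathbb{Z}}$ be a stochastic process such that there exists a family $(I_t^n)_{t\in\mathbb{Z}}$, $n\in\mathbb{N}$, of $\{0,1\}$-valued stationary stochastic processes with $P(I_0^n=1)>0$ for all $n$ and $$\mathcal{L}\bigl((I_t^n)_{t\in\{-u,\dots,v\}}\mid I_0^n=1\bigr)\Longrightarrow \mathcal{L}\bigl((I_t)_{t\in\{-u,\dots,v\}}\bigr)\quad (n\to\infty)$$ for all $u,v\in\mathbb{N}$. Define $S^i=\sum_{t\in\mathbb{Z}}I_t$, $S_+^i=\sum_{t=1}^\infty I_t$, $S_-^i=\sum_{t=1}^\infty I_{-t}$, let $S^i_{\pm}$ denote a random variable with the common distribution of $S_+^i$ and $S_-^i$, and let $\theta:=P(S^i_{\pm}=0)=P(I_t=0\ \forall t>0)=P(I_t=0\ \forall t<0)$. Assume $\theta>0$, let $S^t$ be a random variable with law $\mathcal{L}(S^i\mid S_-^i=0)$, and let $\pi_k:=P(S^t=k)$, $k\in\mathbb{N}$. Then $$\pi_k=\theta^{-1}\bigl[P(S^i_{\pm}=k-1)-P(S^i_{\pm}=k)\bigr],\qquad k\in\mathbb{N},$$ and conversely $$P(S^i_{\pm}=\ell)=\theta\,P(S^t\ge \ell+1)=\theta\sum_{i=\ell+1}^\infty \pi_i,\qquad \ell\in\mathbb{N}_0.$$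
   Context: $\mathbb{N}=\{1,2,\dots\}$, $\mathbb{N}_0=\mathbb{N}\cup\{0\}$. $S^t$ is called the typical cluster size and $\theta$ the extremal index. $\mathcal{L}(\cdot\mid\cdot)$ denotes conditional law and $\Longrightarrow$ convergence in distribution. *)

theory Defs
  imports "HOL-Probability.Probability"
begin

definition cnt :: "int set \<Rightarrow> enat" where
  "cnt A = (if finite A then enat (card A) else \<infinity>)"

definition stationary_proc :: "'a measure \<Rightarrow> (int \<Rightarrow> 'a \<Rightarrow> bool) \<Rightarrow> bool" where
  "stationary_proc M X \<longleftrightarrow>
     (\<forall>t. X t \<in> measurable M (count_space UNIV)) \<and>
     (\<forall>h. distr M (PiM UNIV (\<lambda>_::int. count_space UNIV)) (\<lambda>\<omega> t. X (t + h) \<omega>)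
          = distr M (PiM UNIV (\<lambda>_::int. count_space UNIV)) (\<lambda>\<omega> t. X t \<omega>))"

text \<open>The random vector (X_t) for t in {-u..v}, coded as a real vector indexed by int
  (value 1/0 for true/false inside the window, 0 outside).\<close>
definition window :: "nat \<Rightarrow> nat \<Rightarrow> (int \<Rightarrow> 'a \<Rightarrow> bool) \<Rightarrow> 'a \<Rightarrow> (int \<Rightarrow> real)" where
  "window u v X \<omega> = (\<lambda>t. if - int u \<le> t \<and> t \<le> int v then (if X t \<omega> then 1 else 0) else 0)"

definition cond_expect_event :: "'a measure \<Rightarrow> 'a set \<Rightarrow> ('a \<Rightarrow> real) \<Rightarrow> real" where
  "cond_expect_event M A g = (\<integral>\<omega>. g \<omega> * indicator A \<omega> \<partial>M) / measure M A"

text \<open>Convergence in distribution of the finite-dimensional conditional laws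
  L((In_t)_{t=-u..v} | In_0 = 1) to L((I_t)_{t=-u..v}) for all u, v in N = {1,2,...}:
  convergence of expectations of all bounded continuous test functions.\<close>
definition tail_fdd_conv ::
  "(nat \<Rightarrow> 'b measure) \<Rightarrow> (nat \<Rightarrow> int \<Rightarrow> 'b \<Rightarrow> bool) \<Rightarrow> 'a measure \<Rightarrow> (int \<Rightarrow> 'a \<Rightarrow> bool) \<Rightarrow> bool" where
  "tail_fdd_conv Mn In M I \<longleftrightarrow>
     (\<forall>u v. 1 \<le> u \<and> 1 \<le> v \<longrightarrow>
        (\<forall>f :: (int \<Rightarrow> real) \<Rightarrow> real. continuous_on UNIV f \<and> bounded (range f) \<longrightarrow>
           (\<lambda>n. cond_expect_event (Mn n) {\<omega> \<in> space (Mn n). In n 0 \<omega>} (\<lambda>\<omega>. f (window u v (In n) \<omega>)))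
             \<longlonglongrightarrow> (\<integral>\<omega>. f (window u v I \<omega>) \<partial>M)))"

end

(*
  Write N_- and N_+ for the numbers of exceedances (times t with I t) before and after 0.
  Stationarity of the I^n survives the conditional limit on cylinder events; extending from
  cylinders by uniqueness of measures on path space yields I 0 = 1 almost surely and the
  time-change formula P(I s, I in C) = P(I (-s), I (. - s) in C).  Decomposing a path by its
  last exceedance before 0, resp. its first exceedance after 0, the formula shows that moving
  one exceedance from the past to the future does not change probabilities:
    P(N_- = p + 1, N_+ = q) = P(N_- = p, N_+ = q + 1).
  Hence P(N_- = r, N_+ = k) = c (k + r) with c n = P(N_- = 0, N_+ = n), no mass sits at
  infinity, and summing over r gives
    P(N_+ = k) = P(N_- = k) = P(N_- = 0, N_+ >= k) = sum over n >= k of c n.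
  As the total count is N_- + 1 + N_+, these identities are the claim, with
  theta = P(N_- = 0) and pi k = c (k - 1) / theta.
*)

theory Submission
  imports Defs
begin

section \<open>Counting exceedances\<close>

lemma cnt_eq_0_iff: "cnt A = 0 \<longleftrightarrow> A = {}"
  by (auto simp: cnt_def zero_enat_def card_eq_0_iff)

lemma cnt_insert: "a \<notin> A \<Longrightarrow> cnt (insert a A) = eSuc (cnt A)"
  by (auto simp: cnt_def eSuc_enat)

lemma cnt_Un_disjoint: "A \<inter> B = {} \<Longrightarrow> cnt (A \<union> B) = cnt A + cnt B"
  by (auto simp: cnt_def card_Un_disjoint)

lemma cnt_image: "inj_on f A \<Longrightarrow> cnt (f ` A) = cnt A"
  by (auto simp: cnt_def card_image dest: finite_imageD)

lemma cnt_translate: "cnt {t. P t \<and> x (t - s)} = cnt {t. P (t + s) \<and> x (t::int)}"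
proof -
  have "{t. P t \<and> x (t - s)} = (\<lambda>t. t + s) ` {t. P (t + s) \<and> x t}"
    by (auto simp: image_iff intro!: exI[of _ "_ - s"])
  then show ?thesis by (simp add: cnt_image)
qed

lemma cnt_split_at_0:
  assumes "x 0"
  shows "cnt {t. x t} = cnt {t. t < 0 \<and> x t} + eSuc (cnt {t. 0 < t \<and> x t})"
proof -
  have split: "{t. x t} = {t. t < 0 \<and> x t} \<union> insert 0 {t. 0 < t \<and> x t}"
    using assms by auto
  have "cnt {t. x t} = cnt {t. t < 0 \<and> x t} + cnt (insert 0 {t. 0 < t \<and> x t})"
    unfolding split by (rule cnt_Un_disjoint) auto
  then show ?thesis
    by (simp add: cnt_insert)
qed

lemma enat_le_cnt_iff: "enat k \<le> cnt A \<longleftrightarrow> (\<exists>S\<in>{S. finite S \<and> card S = k}. S \<subseteq> A)"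
proof
  assume "enat k \<le> cnt A"
  then show "\<exists>S\<in>{S. finite S \<and> card S = k}. S \<subseteq> A"
    by (cases "finite A")
       (auto simp: cnt_def intro: obtain_subset_with_card_n dest: infinite_arbitrarily_large)
next
  assume "\<exists>S\<in>{S. finite S \<and> card S = k}. S \<subseteq> A"
  then show "enat k \<le> cnt A"
    by (auto simp: cnt_def intro: card_mono dest: finite_subset)
qed

lemma enat_eq_iff_le_Suc: "x = enat k \<longleftrightarrow> enat k \<le> x \<and> \<not> enat (Suc k) \<le> x"
  by (cases x) auto

lemma infinity_eq_iff_le: "x = \<infinity> \<longleftrightarrow> (\<forall>k. enat k \<le> x)"
  by (cases x) (auto, metis Suc_n_not_le_n)

lemma measurable_cnt[measurable]:
  fixes X :: "int \<Rightarrow> 'a \<Rightarrow> bool"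
  assumes [measurable]: "\<And>t. Measurable.pred N (X t)"
  shows "(\<lambda>\<omega>. cnt {t. X t \<omega>}) \<in> measurable N (count_space UNIV)"
proof -
  have [measurable]: "Measurable.pred N (\<lambda>\<omega>. enat k \<le> cnt {t. X t \<omega>})" for k
    unfolding enat_le_cnt_iff pred_def subset_eq mem_Collect_eq
    by (rule sets.sets_Collect_countable_Ex')
       (measurable, rule countable_subset[OF _ countable_Collect_finite], blast)
  have "{\<omega>\<in>space N. cnt {t. X t \<omega>} = e} \<in> sets N" for e
  proof (cases e)
    case (enat k)
    show ?thesis unfolding enat enat_eq_iff_le_Suc by measurable
  next
    case infinity
    show ?thesis unfolding infinity infinity_eq_iff_le by measurable
  qed
  then show ?thesis
    by (simp add: measurable_count_space_eq2_countable vimage_def Int_def conj_commute)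
qed

definition consecutive_exceedances :: "(int \<Rightarrow> bool) \<Rightarrow> int \<Rightarrow> int \<Rightarrow> bool" where
  "consecutive_exceedances x a b \<longleftrightarrow> a < b \<and> x a \<and> x b \<and> (\<forall>t. a < t \<and> t < b \<longrightarrow> \<not> x t)"

lemma consecutive_exceedancesD: "consecutive_exceedances x a b \<Longrightarrow> x a \<and> x b"
  by (simp add: consecutive_exceedances_def)

lemma consecutive_exceedances_shift:
  "consecutive_exceedances (\<lambda>t. x (t - s)) a b \<longleftrightarrow> consecutive_exceedances x (a - s) (b - s)"
  unfolding consecutive_exceedances_def
  by (auto, metis add_diff_cancel_right' diff_less_eq less_diff_eq)

lemma consecutive_exceedances_reflect:
  "consecutive_exceedances (\<lambda>t. x (- t)) a b \<longleftrightarrow> consecutive_exceedances x (- b) (- a)"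
  unfolding consecutive_exceedances_def
  by (auto, metis less_minus_iff minus_less_iff minus_minus)

lemma cnt_less_consecutive_exceedances:
  assumes "consecutive_exceedances x a b"
  shows "cnt {t. t < b \<and> x t} = eSuc (cnt {t. t < a \<and> x t})"
proof -
  have "{t. t < b \<and> x t} = insert a {t. t < a \<and> x t}"
    using assms unfolding consecutive_exceedances_def by (auto simp: not_less_iff_gr_or_eq)
  then show ?thesis by (simp add: cnt_insert)
qed

lemma cnt_greater_consecutive_exceedances:
  assumes "consecutive_exceedances x a b"
  shows "cnt {t. a < t \<and> x t} = eSuc (cnt {t. b < t \<and> x t})"
proof -
  have "{t. a < t \<and> x t} = insert b {t. b < t \<and> x t}"
    using assms unfolding consecutive_exceedances_def by (auto simp: not_less_iff_gr_or_eq)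
  then show ?thesis by (simp add: cnt_insert)
qed

lemma consecutive_exceedances_shift_cnt_iff:
  "consecutive_exceedances (\<lambda>t. x (t - s)) 0 s \<and> cnt {t. t < 0 \<and> x (t - s)} = p
      \<and> cnt {t. s < t \<and> x (t - s)} = q
    \<longleftrightarrow> consecutive_exceedances x (- s) 0 \<and> cnt {t. t < 0 \<and> x t} = eSuc p \<and> cnt {t. 0 < t \<and> x t} = q"
proof -
  have "cnt {t. t < 0 \<and> x (t - s)} = cnt {t. t < - s \<and> x t}"
  proof -
    have "cnt {t. t < 0 \<and> x (t - s)} = cnt {t. t + s < 0 \<and> x t}" by (rule cnt_translate)
    also have "{t. t + s < 0 \<and> x t} = {t. t < - s \<and> x t}" by auto
    finally show ?thesis .
  qed
  moreover have "cnt {t. s < t \<and> x (t - s)} = cnt {t. 0 < t \<and> x t}"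
    using cnt_translate[of "\<lambda>t. s < t" x s] by simp
  moreover have "consecutive_exceedances (\<lambda>t. x (t - s)) 0 s \<longleftrightarrow> consecutive_exceedances x (- s) 0"
    using consecutive_exceedances_shift[of x s 0 s] by simp
  ultimately show ?thesis
    by (auto dest: cnt_less_consecutive_exceedances)
qed

lemma consecutive_exceedances_cnt_iff:
  "consecutive_exceedances x 0 s \<and> cnt {t. t < 0 \<and> x t} = p \<and> cnt {t. s < t \<and> x t} = q
    \<longleftrightarrow> consecutive_exceedances x 0 s \<and> cnt {t. t < 0 \<and> x t} = p \<and> cnt {t. 0 < t \<and> x t} = eSuc q"
  by (auto dest: cnt_greater_consecutive_exceedances)

lemma ex1_consecutive_exceedances_after:
  assumes "x 0" "\<exists>t>0. x t"
  shows "\<exists>!n::nat. consecutive_exceedances x 0 (int n + 1)"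
proof -
  from assms obtain t where "0 < t" "x t" by blast
  then have "x (int (nat (t - 1)) + 1)" by simp
  define n where "n = (LEAST n. x (int n + 1))"
  have n: "x (int n + 1)"
    unfolding n_def by (rule LeastI) fact
  have before_n: "\<not> x (int m + 1)" if "m < n" for m
    using that unfolding n_def by (rule not_less_Least)
  have "\<not> x t" if "0 < t" "t < int n + 1" for t
    using before_n[of "nat (t - 1)"] that by simp
  then have "consecutive_exceedances x 0 (int n + 1)"
    unfolding consecutive_exceedances_def using assms(1) n by auto
  moreover have "m = n" if "consecutive_exceedances x 0 (int m + 1)" for m
    using that \<open>consecutive_exceedances x 0 (int n + 1)\<close> unfolding consecutive_exceedances_def
    by (cases m n rule: linorder_cases) auto
  ultimately show ?thesis by blast
qed

lemma ex1_consecutive_exceedances_before: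
  assumes "x 0" "\<exists>t<0. x t"
  shows "\<exists>!n::nat. consecutive_exceedances x (- (int n + 1)) 0"
  using ex1_consecutive_exceedances_after[of "\<lambda>t. x (- t)"] assms
  by (simp add: consecutive_exceedances_reflect) (metis neg_0_less_iff_less minus_minus)

section \<open>Pairs of counts invariant under moving one point\<close>

lemma (in prob_space) sums_prob_unique_index:
  assumes "A \<in> events" "\<And>n. B n \<in> events" "\<And>\<omega>. \<omega> \<in> A \<Longrightarrow> \<exists>!n. \<omega> \<in> B n"
  shows "(\<lambda>n. prob (A \<inter> B n)) sums prob A"
proof -
  have "(\<lambda>n. prob (A \<inter> B n)) sums prob (\<Union>n. A \<inter> B n)"
    by (rule finite_measure_UNION) (use assms in \<open>auto simp: disjoint_family_on_def\<close>)
  moreover have "(\<Union>n. A \<inter> B n) = A"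
    using assms(3) by blast
  ultimately show ?thesis by simp
qed

lemma (in prob_space) sums_prob_finite_values:
  fixes g :: "'a \<Rightarrow> enat"
  assumes [measurable]: "Measurable.pred M Q" "g \<in> measurable M (count_space UNIV)"
  shows "(\<lambda>r. \<P>(\<omega> in M. Q \<omega> \<and> g \<omega> = enat r)) sums (\<P>(\<omega> in M. Q \<omega>) - \<P>(\<omega> in M. Q \<omega> \<and> g \<omega> = \<infinity>))"
proof -
  have "(\<lambda>r. prob ({\<omega>\<in>space M. Q \<omega> \<and> g \<omega> \<noteq> \<infinity>} \<inter> {\<omega>\<in>space M. g \<omega> = enat r}))
      sums prob {\<omega>\<in>space M. Q \<omega> \<and> g \<omega> \<noteq> \<infinity>}"
    by (rule sums_prob_unique_index) (measurable, auto)
  moreover have "{\<omega>\<in>space M. Q \<omega> \<and> g \<omega> \<noteq> \<infinity>} \<inter> {\<omega>\<in>space M. g \<omega> = enat r}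
      = {\<omega>\<in>space M. Q \<omega> \<and> g \<omega> = enat r}" for r
    by auto
  moreover have "prob {\<omega>\<in>space M. Q \<omega> \<and> g \<omega> \<noteq> \<infinity>}
      = prob {\<omega>\<in>space M. Q \<omega>} - prob {\<omega>\<in>space M. Q \<omega> \<and> g \<omega> = \<infinity>}"
  proof -
    have "{\<omega>\<in>space M. Q \<omega> \<and> g \<omega> \<noteq> \<infinity>} = {\<omega>\<in>space M. Q \<omega>} - {\<omega>\<in>space M. Q \<omega> \<and> g \<omega> = \<infinity>}"
      by auto
    also have "prob \<dots> = prob {\<omega>\<in>space M. Q \<omega>} - prob {\<omega>\<in>space M. Q \<omega> \<and> g \<omega> = \<infinity>}"
      by (rule finite_measure_Diff) (measurable, measurable, auto)
    finally show ?thesis .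
  qed
  ultimately show ?thesis by simp
qed

locale count_transfer = prob_space +
  fixes X Y :: "'a \<Rightarrow> enat"
  assumes measurable_X[measurable]: "X \<in> measurable M (count_space UNIV)"
    and measurable_Y[measurable]: "Y \<in> measurable M (count_space UNIV)"
    and transfer: "\<And>p q. \<P>(\<omega> in M. X \<omega> = eSuc p \<and> Y \<omega> = q) = \<P>(\<omega> in M. X \<omega> = p \<and> Y \<omega> = eSuc q)"
begin

abbreviation joint :: "enat \<Rightarrow> enat \<Rightarrow> real" where
  "joint p q \<equiv> \<P>(\<omega> in M. X \<omega> = p \<and> Y \<omega> = q)"

lemma summable_joint_left: "summable (\<lambda>r. joint p (enat r))"
  using sums_prob_finite_values[of "\<lambda>\<omega>. X \<omega> = p" Y] by (auto intro: sums_summable)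

lemma summable_joint_right: "summable (\<lambda>r. joint (enat r) q)"
  using sums_prob_finite_values[of "\<lambda>\<omega>. Y \<omega> = q" X] by (auto simp: conj_commute intro: sums_summable)

lemma joint_infinity_left: "joint \<infinity> (enat k) = 0"
proof -
  have "joint \<infinity> (enat (Suc k)) = joint \<infinity> (enat k)" for k
    using transfer[of \<infinity> "enat k"] by (simp add: eSuc_enat)
  then have "joint \<infinity> (enat k) = joint \<infinity> 0" for k
    by (induction k) (simp_all add: zero_enat_def)
  with summable_joint_left[of \<infinity>] show ?thesis
    by (simp add: summable_const_iff)
qed

lemma joint_infinity_right: "joint (enat r) \<infinity> = 0"
proof -
  have "joint (enat (Suc r)) \<infinity> = joint (enat r) \<infinity>" for r
    using transfer[of "enat r" \<infinity>] by (simp add: eSuc_enat)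
  then have "joint (enat r) \<infinity> = joint 0 \<infinity>" for r
    by (induction r) (simp_all add: zero_enat_def)
  with summable_joint_right[of \<infinity>] show ?thesis
    by (simp add: summable_const_iff)
qed

lemma joint_enat: "joint (enat r) (enat k) = joint 0 (enat (k + r))"
proof (induction r arbitrary: k)
  case (Suc r)
  have "joint (enat (Suc r)) (enat k) = joint (enat r) (enat (Suc k))"
    using transfer[of "enat r" "enat k"] by (simp add: eSuc_enat)
  then show ?case
    using Suc.IH[of "Suc k"] by simp
qed (simp add: zero_enat_def)

lemma sums_joint_Y: "(\<lambda>r. joint 0 (enat (k + r))) sums \<P>(\<omega> in M. Y \<omega> = enat k)"
  using sums_prob_finite_values[of "\<lambda>\<omega>. Y \<omega> = enat k" X]
  by (simp add: conj_commute joint_enat joint_infinity_left)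

lemma sums_joint_X: "(\<lambda>r. joint 0 (enat (k + r))) sums \<P>(\<omega> in M. X \<omega> = enat k)"
  using sums_prob_finite_values[of "\<lambda>\<omega>. X \<omega> = enat k" Y]
  by (simp add: joint_enat joint_infinity_right add.commute)

lemma prob_X_eq_Y: "\<P>(\<omega> in M. X \<omega> = enat k) = \<P>(\<omega> in M. Y \<omega> = enat k)"
  using sums_joint_X sums_joint_Y by (rule sums_unique2)

lemma prob_Y_eq_prob_X_0_Y_ge: "\<P>(\<omega> in M. Y \<omega> = enat k) = \<P>(\<omega> in M. X \<omega> = 0 \<and> enat k \<le> Y \<omega>)"
proof -
  have "(\<lambda>r. \<P>(\<omega> in M. (X \<omega> = 0 \<and> enat k \<le> Y \<omega>) \<and> Y \<omega> = enat r))
      sums (\<P>(\<omega> in M. X \<omega> = 0 \<and> enat k \<le> Y \<omega>) - \<P>(\<omega> in M. (X \<omega> = 0 \<and> enat k \<le> Y \<omega>) \<and> Y \<omega> = \<infinity>))"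
    by (rule sums_prob_finite_values) measurable
  moreover have "\<P>(\<omega> in M. (X \<omega> = 0 \<and> enat k \<le> Y \<omega>) \<and> Y \<omega> = enat r) = (if k \<le> r then joint 0 (enat r) else 0)" for r
  proof (cases "k \<le> r")
    case False
    then have empty: "{\<omega>\<in>space M. (X \<omega> = 0 \<and> enat k \<le> Y \<omega>) \<and> Y \<omega> = enat r} = {}"
      by auto
    show ?thesis
      unfolding empty using False by simp
  qed (auto intro!: arg_cong[where f=prob])
  moreover have "\<P>(\<omega> in M. (X \<omega> = 0 \<and> enat k \<le> Y \<omega>) \<and> Y \<omega> = \<infinity>) = 0"
  proof -
    have "{\<omega>\<in>space M. (X \<omega> = 0 \<and> enat k \<le> Y \<omega>) \<and> Y \<omega> = \<infinity>} = {\<omega>\<in>space M. X \<omega> = enat 0 \<and> Y \<omega> = \<infinity>}"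
      by (auto simp: zero_enat_def)
    then show ?thesis
      using joint_infinity_right[of 0] by simp
  qed
  ultimately have "(\<lambda>r. if k \<le> r then joint 0 (enat r) else 0) sums \<P>(\<omega> in M. X \<omega> = 0 \<and> enat k \<le> Y \<omega>)"
    by simp
  then have "(\<lambda>r. joint 0 (enat (k + r))) sums \<P>(\<omega> in M. X \<omega> = 0 \<and> enat k \<le> Y \<omega>)"
    using sums_iff_shift[of "\<lambda>r. if k \<le> r then joint 0 (enat r) else 0" k] by (simp add: add.commute)
  with sums_joint_Y show ?thesis
    by (rule sums_unique2)
qed

lemma joint_0_eq_diff: "joint 0 (enat k) = \<P>(\<omega> in M. Y \<omega> = enat k) - \<P>(\<omega> in M. Y \<omega> = enat (Suc k))"
proof -
  have "(\<lambda>r. joint 0 (enat (k + r))) sums (\<P>(\<omega> in M. Y \<omega> = enat (Suc k)) + joint 0 (enat k))"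
    using sums_joint_Y[of "Suc k"] sums_Suc_iff[of "\<lambda>r. joint 0 (enat (k + r))"] by simp
  from sums_unique2[OF sums_joint_Y[of k] this] show ?thesis
    by simp
qed

end

section \<open>Cylinder events and the convergence hypothesis\<close>

definition clamp01 :: "real \<Rightarrow> real" where
  "clamp01 z = max 0 (min 1 z)"

text \<open>A continuous stand-in for the indicator of \<open>B\<close>, exact at the values 0 and 1 taken by
  \<open>window\<close>: the convergence hypothesis only applies to bounded continuous test functions.\<close>

definition soft_indicator :: "bool set \<Rightarrow> real \<Rightarrow> real" where
  "soft_indicator B z =
     (if False \<in> B then 1 - clamp01 z else 0) + (if True \<in> B then clamp01 z else 0)"

text \<open>A cylinder event is given by a set of constraints \<open>(t, B)\<close>, meaning \<open>X t \<in> B\<close>; being a set of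
  pairs rather than a function of \<open>t\<close>, it can take a further constraint at an already constrained time.\<close>

definition cylinder_test :: "(int \<times> bool set) set \<Rightarrow> (int \<Rightarrow> real) \<Rightarrow> real" where
  "cylinder_test Cs y = (\<Prod>(t, B)\<in>Cs. soft_indicator B (y t))"

lemma soft_indicator_of_bool: "soft_indicator B (if b then 1 else 0) = (if b \<in> B then 1 else 0)"
  by (cases b) (auto simp: soft_indicator_def clamp01_def)

lemma soft_indicator_bounds: "0 \<le> soft_indicator B z" "soft_indicator B z \<le> 1"
  by (auto simp: soft_indicator_def clamp01_def)

lemma continuous_on_soft_indicator: "continuous_on UNIV (soft_indicator B)"
  unfolding soft_indicator_def clamp01_def
  by (cases "False \<in> B"; cases "True \<in> B") (auto intro!: continuous_intros)

lemma continuous_on_cylinder_test: "continuous_on UNIV (cylinder_test Cs)"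
  unfolding cylinder_test_def case_prod_beta
  by (intro continuous_on_prod continuous_on_compose2[OF continuous_on_soft_indicator]
      continuous_on_product_coordinates) auto

lemma bounded_cylinder_test: "bounded (range (cylinder_test Cs))"
proof -
  have "0 \<le> cylinder_test Cs y" "cylinder_test Cs y \<le> 1" for y
    unfolding cylinder_test_def case_prod_beta
    by (simp_all add: prod_nonneg prod_le_1 soft_indicator_bounds)
  then show ?thesis unfolding bounded_real by (metis abs_le_iff rangeE order.trans neg_le_0_iff_le)
qed

lemma cylinder_test_window:
  assumes "\<forall>(t, B)\<in>Cs. \<bar>t\<bar> \<le> int u"
  shows "cylinder_test Cs (window u u X \<omega>) = (if \<forall>(t, B)\<in>Cs. X t \<omega> \<in> B then 1 else 0)"
proof -
  have bound: "- int u \<le> t \<and> t \<le> int u" if "(t, B) \<in> Cs" for t B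
    using assms that by auto
  then have "cylinder_test Cs (window u u X \<omega>) = (\<Prod>(t, B)\<in>Cs. if X t \<omega> \<in> B then 1 else 0)"
    unfolding cylinder_test_def window_def
    by (intro prod.cong refl) (auto simp: soft_indicator_of_bool)
  also have "\<dots> = (if \<forall>(t, B)\<in>Cs. X t \<omega> \<in> B then 1 else 0)"
  proof -
    have "finite Cs"
      by (rule finite_subset[of _ "{- int u..int u} \<times> UNIV"]) (auto dest: bound)
    then show ?thesis by (induction Cs rule: finite_induct) auto
  qed
  finally show ?thesis .
qed

lemma integral_if_pred: "(\<integral>\<omega>. (if P \<omega> then 1 else 0::real) \<partial>N) = \<P>(\<omega> in N. P \<omega>)"
proof -
  have "(\<integral>\<omega>. (if P \<omega> then 1 else 0::real) \<partial>N) = (\<integral>\<omega>. indicator {\<omega>\<in>space N. P \<omega>} \<omega> \<partial>N)"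
    by (intro Bochner_Integration.integral_cong) (auto simp: indicator_def)
  then show ?thesis by (simp add: Int_absorb2)
qed

lemma tail_fdd_conv_cylinder_tendsto:
  fixes Cs :: "(int \<times> bool set) set"
  assumes conv: "tail_fdd_conv Mn In M I" and "finite Cs"
  shows "(\<lambda>n. \<P>(\<omega> in Mn n. (\<forall>(t, B)\<in>Cs. In n t \<omega> \<in> B) \<and> In n 0 \<omega>) / \<P>(\<omega> in Mn n. In n 0 \<omega>))
           \<longlonglongrightarrow> \<P>(\<omega> in M. \<forall>(t, B)\<in>Cs. I t \<omega> \<in> B)"
proof -
  define u where "u = nat (\<Sum>(t, B)\<in>Cs. \<bar>t\<bar>) + 1"
  have "1 \<le> u" by (simp add: u_def)
  have u: "\<forall>(t, B)\<in>Cs. \<bar>t\<bar> \<le> int u"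
  proof (clarify)
    fix t B assume "(t, B) \<in> Cs"
    then have "\<bar>t\<bar> \<le> (\<Sum>(t, B)\<in>Cs. \<bar>t\<bar>)"
      using member_le_sum[of "(t, B)" Cs "\<lambda>(t, B). \<bar>t\<bar>"] \<open>finite Cs\<close> by auto
    then show "\<bar>t\<bar> \<le> int u" by (auto simp: u_def)
  qed
  have "(\<lambda>n. cond_expect_event (Mn n) {\<omega> \<in> space (Mn n). In n 0 \<omega>}
          (\<lambda>\<omega>. cylinder_test Cs (window u u (In n) \<omega>)))
        \<longlonglongrightarrow> (\<integral>\<omega>. cylinder_test Cs (window u u I \<omega>) \<partial>M)"
    using conv continuous_on_cylinder_test bounded_cylinder_test \<open>1 \<le> u\<close>
    unfolding tail_fdd_conv_def by blast
  moreover have "(\<integral>\<omega>. cylinder_test Cs (window u u I \<omega>) \<partial>M) = \<P>(\<omega> in M. \<forall>(t, B)\<in>Cs. I t \<omega> \<in> B)"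
    unfolding cylinder_test_window[OF u]
    by (rule integral_if_pred)
  moreover have "cond_expect_event (Mn n) {\<omega> \<in> space (Mn n). In n 0 \<omega>}
          (\<lambda>\<omega>. cylinder_test Cs (window u u (In n) \<omega>))
      = \<P>(\<omega> in Mn n. (\<forall>(t, B)\<in>Cs. In n t \<omega> \<in> B) \<and> In n 0 \<omega>) / \<P>(\<omega> in Mn n. In n 0 \<omega>)" for n
  proof -
    have "(\<integral>\<omega>. (if \<forall>(t, B)\<in>Cs. In n t \<omega> \<in> B then 1 else 0::real) * indicator {\<omega> \<in> space (Mn n). In n 0 \<omega>} \<omega> \<partial>Mn n)
        = (\<integral>\<omega>. (if (\<forall>(t, B)\<in>Cs. In n t \<omega> \<in> B) \<and> In n 0 \<omega> then 1 else 0) \<partial>Mn n)"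
      by (intro Bochner_Integration.integral_cong) (auto simp: indicator_def)
    also have "\<dots> = \<P>(\<omega> in Mn n. (\<forall>(t, B)\<in>Cs. In n t \<omega> \<in> B) \<and> In n 0 \<omega>)"
      by (rule integral_if_pred)
    finally show ?thesis
      unfolding cond_expect_event_def cylinder_test_window[OF u] by simp
  qed
  ultimately show ?thesis by simp
qed

lemma tail_fdd_conv_AE_at_0:
  assumes conv: "tail_fdd_conv Mn In M I"
    and M: "prob_space M" and [measurable]: "\<And>t. I t \<in> measurable M (count_space UNIV)"
    and pos: "\<And>n. \<P>(\<omega> in Mn n. In n 0 \<omega>) > 0"
  shows "AE \<omega> in M. I 0 \<omega>"
proof -
  have "(\<lambda>n. \<P>(\<omega> in Mn n. (\<forall>(t, B)\<in>{(0, {True})}. In n t \<omega> \<in> B) \<and> In n 0 \<omega>) / \<P>(\<omega> in Mn n. In n 0 \<omega>))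
      \<longlonglongrightarrow> \<P>(\<omega> in M. \<forall>(t, B)\<in>{(0, {True})}. I t \<omega> \<in> B)"
    by (rule tail_fdd_conv_cylinder_tendsto[OF conv]) simp_all
  then have "(\<lambda>n. 1) \<longlonglongrightarrow> \<P>(\<omega> in M. I 0 \<omega>)"
    using pos by (simp add: less_le)
  then have "\<P>(\<omega> in M. I 0 \<omega>) = 1"
    using LIMSEQ_const_iff by metis
  then show ?thesis
    by (simp add: prob_space.prob_Collect_eq_1[OF M])
qed

section \<open>The time-change formula\<close>

abbreviation bool_paths :: "(int \<Rightarrow> bool) measure" where
  "bool_paths \<equiv> PiM UNIV (\<lambda>_::int. count_space UNIV)"

lemma measurable_path:
  "(\<And>t. X t \<in> measurable N (count_space UNIV)) \<Longrightarrow> (\<lambda>\<omega> t. X (g t) \<omega>) \<in> measurable N bool_paths"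
  by (rule measurable_PiM_single') auto

lemma stationary_proc_prob_shift:
  assumes stat: "stationary_proc N X" and C: "C \<in> sets bool_paths"
  shows "\<P>(\<omega> in N. (\<lambda>t. X (t + h) \<omega>) \<in> C) = \<P>(\<omega> in N. (\<lambda>t. X t \<omega>) \<in> C)"
proof -
  have X: "\<And>t. X t \<in> measurable N (count_space UNIV)"
    and distr_eq: "distr N bool_paths (\<lambda>\<omega> t. X (t + h) \<omega>) = distr N bool_paths (\<lambda>\<omega> t. X t \<omega>)"
    using stat unfolding stationary_proc_def by blast+
  have "(\<lambda>\<omega> t. X (t + h) \<omega>) \<in> measurable N bool_paths" "(\<lambda>\<omega> t. X t \<omega>) \<in> measurable N bool_paths"
    by (rule measurable_path[OF X])+
  then have "measure N ((\<lambda>\<omega> t. X (t + h) \<omega>) -` C \<inter> space N) = measure N ((\<lambda>\<omega> t. X t \<omega>) -` C \<inter> space N)"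
    using distr_eq C by (metis measure_distr)
  then show ?thesis by (simp add: vimage_def Int_def conj_commute)
qed

definition time_change :: "'a measure \<Rightarrow> (int \<Rightarrow> 'a \<Rightarrow> bool) \<Rightarrow> bool" where
  "time_change M I \<longleftrightarrow> (\<forall>s. \<forall>C\<in>sets bool_paths.
     \<P>(\<omega> in M. I s \<omega> \<and> (\<lambda>t. I t \<omega>) \<in> C) = \<P>(\<omega> in M. I (- s) \<omega> \<and> (\<lambda>t. I (t - s) \<omega>) \<in> C))"

lemma tail_fdd_conv_time_change_cylinder:
  fixes Cs :: "(int \<times> bool set) set"
  assumes conv: "tail_fdd_conv Mn In M I" and stat: "\<And>n. stationary_proc (Mn n) (In n)"
    and "finite Cs"
  shows "\<P>(\<omega> in M. I s \<omega> \<and> (\<forall>(t, B)\<in>Cs. I t \<omega> \<in> B))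
       = \<P>(\<omega> in M. I (- s) \<omega> \<and> (\<forall>(t, B)\<in>Cs. I (t - s) \<omega> \<in> B))"
proof -
  define Cs1 where "Cs1 = insert (s, {True}) Cs"
  define Cs2 where "Cs2 = insert (- s, {True}) ((\<lambda>(t, B). (t - s, B)) ` Cs)"
  have "finite Cs1" "finite Cs2" using \<open>finite Cs\<close> by (simp_all add: Cs1_def Cs2_def)
  have "\<P>(\<omega> in Mn n. (\<forall>(t, B)\<in>Cs1. In n t \<omega> \<in> B) \<and> In n 0 \<omega>)
      = \<P>(\<omega> in Mn n. (\<forall>(t, B)\<in>Cs2. In n t \<omega> \<in> B) \<and> In n 0 \<omega>)" for n
  proof -
    define D where "D = {y\<in>space bool_paths. y 0 \<and> y (- s) \<and> (\<forall>(t, B)\<in>Cs. y (t - s) \<in> B)}"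
    have "D \<in> sets bool_paths"
      unfolding D_def case_prod_beta by measurable
    from stationary_proc_prob_shift[OF stat this, where h = s]
    show ?thesis by (simp add: D_def Cs1_def Cs2_def space_PiM case_prod_beta conj_ac)
  qed
  moreover have "(\<lambda>n. \<P>(\<omega> in Mn n. (\<forall>(t, B)\<in>Cs1. In n t \<omega> \<in> B) \<and> In n 0 \<omega>) / \<P>(\<omega> in Mn n. In n 0 \<omega>))
      \<longlonglongrightarrow> \<P>(\<omega> in M. \<forall>(t, B)\<in>Cs1. I t \<omega> \<in> B)"
    by (rule tail_fdd_conv_cylinder_tendsto[OF conv]) (simp_all add: \<open>finite Cs1\<close>)
  moreover have "(\<lambda>n. \<P>(\<omega> in Mn n. (\<forall>(t, B)\<in>Cs2. In n t \<omega> \<in> B) \<and> In n 0 \<omega>) / \<P>(\<omega> in Mn n. In n 0 \<omega>))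
      \<longlonglongrightarrow> \<P>(\<omega> in M. \<forall>(t, B)\<in>Cs2. I t \<omega> \<in> B)"
    by (rule tail_fdd_conv_cylinder_tendsto[OF conv]) (simp_all add: \<open>finite Cs2\<close>)
  ultimately have "\<P>(\<omega> in M. \<forall>(t, B)\<in>Cs1. I t \<omega> \<in> B) = \<P>(\<omega> in M. \<forall>(t, B)\<in>Cs2. I t \<omega> \<in> B)"
    using LIMSEQ_unique by simp
  then show ?thesis by (simp add: Cs1_def Cs2_def case_prod_beta)
qed

lemma emeasure_distr_density_indicator:
  assumes "f \<in> measurable M N" "A \<in> sets M" "C \<in> sets N"
  shows "emeasure (distr (density M (indicator A)) N f) C = emeasure M (A \<inter> (f -` C \<inter> space M))"
  using assms by (simp add: emeasure_distr emeasure_restricted)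

lemma time_changeI_cylinder:
  assumes M: "prob_space M" and I[measurable]: "\<And>t. I t \<in> measurable M (count_space UNIV)"
    and cylinder: "\<And>s Cs. finite Cs \<Longrightarrow> \<P>(\<omega> in M. I s \<omega> \<and> (\<forall>(t, B)\<in>Cs. I t \<omega> \<in> B))
       = \<P>(\<omega> in M. I (- s) \<omega> \<and> (\<forall>(t, B)\<in>Cs. I (t - s) \<omega> \<in> B))"
  shows "time_change M I"
  unfolding time_change_def
proof (intro allI ballI)
  interpret prob_space M by fact
  fix s :: int and C assume C: "C \<in> sets bool_paths"
  have law: "emeasure (distr (density M (indicator {\<omega>\<in>space M. I r \<omega>})) bool_paths (\<lambda>\<omega> t. I (g t) \<omega>)) D
      = \<P>(\<omega> in M. I r \<omega> \<and> (\<lambda>t. I (g t) \<omega>) \<in> D)" if "D \<in> sets bool_paths" for r g D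
  proof -
    have "(\<lambda>\<omega> t. I (g t) \<omega>) \<in> measurable M bool_paths" by (rule measurable_path[OF I])
    then show ?thesis using that
      by (subst emeasure_distr_density_indicator) (auto simp: emeasure_eq_measure intro!: arg_cong[where f=prob])
  qed
  define \<mu> where "\<mu> = distr (density M (indicator {\<omega>\<in>space M. I s \<omega>})) bool_paths (\<lambda>\<omega> t. I t \<omega>)"
  define \<nu> where "\<nu> = distr (density M (indicator {\<omega>\<in>space M. I (- s) \<omega>})) bool_paths (\<lambda>\<omega> t. I (t - s) \<omega>)"
  have "\<mu> = \<nu>"
  proof (rule measure_eqI_PiM_infinite)
    show "sets \<mu> = sets bool_paths" "sets \<nu> = sets bool_paths" by (simp_all add: \<mu>_def \<nu>_def)
    show "finite_measure \<mu>"
      by (rule finite_measureI) (use law[OF sets.top, of s "\<lambda>t. t"] in \<open>simp add: \<mu>_def\<close>)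
  next
    fix J :: "int set" and A assume "finite J"
    have cyl: "prod_emb UNIV (\<lambda>_. count_space UNIV) J (Pi\<^sub>E J A) = {y\<in>space bool_paths. \<forall>j\<in>J. y j \<in> A j}"
      by (auto simp: prod_emb_def space_PiM)
    have "{y\<in>space bool_paths. \<forall>j\<in>J. y j \<in> A j} \<in> sets bool_paths" by measurable
    moreover have "\<P>(\<omega> in M. I s \<omega> \<and> (\<forall>j\<in>J. I j \<omega> \<in> A j)) = \<P>(\<omega> in M. I (- s) \<omega> \<and> (\<forall>j\<in>J. I (j - s) \<omega> \<in> A j))"
      using cylinder[of "(\<lambda>j. (j, A j)) ` J" s] \<open>finite J\<close> by simp
    ultimately show "emeasure \<mu> (prod_emb UNIV (\<lambda>_. count_space UNIV) J (Pi\<^sub>E J A))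
        = emeasure \<nu> (prod_emb UNIV (\<lambda>_. count_space UNIV) J (Pi\<^sub>E J A))"
      unfolding \<mu>_def \<nu>_def cyl by (simp add: law space_PiM)
  qed
  then show "\<P>(\<omega> in M. I s \<omega> \<and> (\<lambda>t. I t \<omega>) \<in> C) = \<P>(\<omega> in M. I (- s) \<omega> \<and> (\<lambda>t. I (t - s) \<omega>) \<in> C)"
    using arg_cong[OF \<open>\<mu> = \<nu>\<close>, of "\<lambda>P. emeasure P C"] unfolding \<mu>_def \<nu>_def law[OF C] by simp
qed

lemma time_change_transfer:
  assumes M: "prob_space M" and [measurable]: "\<And>t. I t \<in> measurable M (count_space UNIV)"
    and tc: "time_change M I"
  shows "\<P>(\<omega> in M. I 0 \<omega> \<and> cnt {t. t < 0 \<and> I t \<omega>} = eSuc p \<and> cnt {t. 0 < t \<and> I t \<omega>} = q)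
       = \<P>(\<omega> in M. I 0 \<omega> \<and> cnt {t. t < 0 \<and> I t \<omega>} = p \<and> cnt {t. 0 < t \<and> I t \<omega>} = eSuc q)"
    (is "measure M ?E = measure M ?F")
proof -
  interpret prob_space M by fact
  txt \<open>If \<open>I (. - s)\<close> lies in \<open>C s\<close>, then \<open>I\<close> lies in \<open>?E\<close> with last exceedance before 0 at \<open>- s\<close>;
    if \<open>I\<close> itself lies in \<open>C s\<close>, then it lies in \<open>?F\<close> with first exceedance after 0 at \<open>s\<close>.\<close>
  define C where "C s = {y\<in>space bool_paths. consecutive_exceedances y 0 s
    \<and> cnt {t. t < 0 \<and> y t} = p \<and> cnt {t. s < t \<and> y t} = q}" for s
  define last_before where
    "last_before s = {\<omega>\<in>space M. consecutive_exceedances (\<lambda>t. I t \<omega>) (- s) 0}" for s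
  define first_after where
    "first_after s = {\<omega>\<in>space M. consecutive_exceedances (\<lambda>t. I t \<omega>) 0 s}" for s
  have C_sets: "C s \<in> sets bool_paths" for s
    unfolding C_def consecutive_exceedances_def by measurable
  have last_before_events: "last_before s \<in> events" for s
    unfolding last_before_def consecutive_exceedances_def by measurable
  have first_after_events: "first_after s \<in> events" for s
    unfolding first_after_def consecutive_exceedances_def by measurable
  have E_events: "?E \<in> events"
    by measurable
  have F_events: "?F \<in> events"
    by measurable
  have shifted: "{\<omega>\<in>space M. I (- s) \<omega> \<and> (\<lambda>t. I (t - s) \<omega>) \<in> C s} = ?E \<inter> last_before s" for s
    using consecutive_exceedances_shift_cnt_iff[of "\<lambda>t. I t _" s]
    by (auto simp: C_def last_before_def space_PiM dest: consecutive_exceedancesD)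
  have unshifted: "{\<omega>\<in>space M. I s \<omega> \<and> (\<lambda>t. I t \<omega>) \<in> C s} = ?F \<inter> first_after s" for s
    using consecutive_exceedances_cnt_iff[of "\<lambda>t. I t _" s]
    by (auto simp: C_def first_after_def space_PiM dest: consecutive_exceedancesD)
  have sums_E: "(\<lambda>n. prob (?E \<inter> last_before (int n + 1))) sums prob ?E"
  proof (rule sums_prob_unique_index[OF E_events last_before_events])
    fix \<omega> assume "\<omega> \<in> ?E"
    then show "\<exists>!n. \<omega> \<in> last_before (int n + 1)"
      using ex1_consecutive_exceedances_before[of "\<lambda>t. I t \<omega>"] cnt_eq_0_iff[of "{t. t < 0 \<and> I t \<omega>}"]
      by (auto simp: last_before_def)
  qed
  have sums_F: "(\<lambda>n. prob (?F \<inter> first_after (int n + 1))) sums prob ?F"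
  proof (rule sums_prob_unique_index[OF F_events first_after_events])
    fix \<omega> assume "\<omega> \<in> ?F"
    then show "\<exists>!n. \<omega> \<in> first_after (int n + 1)"
      using ex1_consecutive_exceedances_after[of "\<lambda>t. I t \<omega>"] cnt_eq_0_iff[of "{t. 0 < t \<and> I t \<omega>}"]
      by (auto simp: first_after_def)
  qed
  have "prob (?E \<inter> last_before s) = prob (?F \<inter> first_after s)" for s
  proof -
    have "\<P>(\<omega> in M. I s \<omega> \<and> (\<lambda>t. I t \<omega>) \<in> C s) = \<P>(\<omega> in M. I (- s) \<omega> \<and> (\<lambda>t. I (t - s) \<omega>) \<in> C s)"
      using tc C_sets unfolding time_change_def by blast
    then show ?thesis
      unfolding shifted unshifted by simp
  qed
  with sums_F have "(\<lambda>n. prob (?E \<inter> last_before (int n + 1))) sums prob ?F"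
    by simp
  with sums_E show ?thesis
    by (rule sums_unique2)
qed

lemma time_change_count_transfer:
  assumes M: "prob_space M" and I[measurable]: "\<And>t. I t \<in> measurable M (count_space UNIV)"
    and tc: "time_change M I" and I0: "AE \<omega> in M. I 0 \<omega>"
  shows "count_transfer M (\<lambda>\<omega>. cnt {t. t < 0 \<and> I t \<omega>}) (\<lambda>\<omega>. cnt {t. 0 < t \<and> I t \<omega>})"
proof -
  interpret prob_space M by fact
  have almost_sure_I0: "\<P>(\<omega> in M. P \<omega>) = \<P>(\<omega> in M. I 0 \<omega> \<and> P \<omega>)" if [measurable]: "Measurable.pred M P" for P
    by (rule prob_eq_AE) (use I0 in auto)
  show ?thesis
  proof
    fix p q
    have "\<P>(\<omega> in M. cnt {t. t < 0 \<and> I t \<omega>} = eSuc p \<and> cnt {t. 0 < t \<and> I t \<omega>} = q)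
        = \<P>(\<omega> in M. I 0 \<omega> \<and> cnt {t. t < 0 \<and> I t \<omega>} = eSuc p \<and> cnt {t. 0 < t \<and> I t \<omega>} = q)"
      by (rule almost_sure_I0) measurable
    also have "\<dots> = \<P>(\<omega> in M. I 0 \<omega> \<and> cnt {t. t < 0 \<and> I t \<omega>} = p \<and> cnt {t. 0 < t \<and> I t \<omega>} = eSuc q)"
      by (rule time_change_transfer[OF M I tc])
    also have "\<dots> = \<P>(\<omega> in M. cnt {t. t < 0 \<and> I t \<omega>} = p \<and> cnt {t. 0 < t \<and> I t \<omega>} = eSuc q)"
      by (rule almost_sure_I0[symmetric]) measurable
    finally show "\<P>(\<omega> in M. cnt {t. t < 0 \<and> I t \<omega>} = eSuc p \<and> cnt {t. 0 < t \<and> I t \<omega>} = q)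
        = \<P>(\<omega> in M. cnt {t. t < 0 \<and> I t \<omega>} = p \<and> cnt {t. 0 < t \<and> I t \<omega>} = eSuc q)" .
  qed measurable
qed

section \<open>The cluster size distribution\<close>

lemma prob_total_cnt_eq:
  assumes M: "prob_space M" and [measurable]: "\<And>t. I t \<in> measurable M (count_space UNIV)"
    and I0: "AE \<omega> in M. I 0 \<omega>"
  shows "\<P>(\<omega> in M. cnt {t. I t \<omega>} = enat (Suc k) \<and> cnt {t. t < 0 \<and> I t \<omega>} = 0)
       = \<P>(\<omega> in M. cnt {t. t < 0 \<and> I t \<omega>} = 0 \<and> cnt {t. 0 < t \<and> I t \<omega>} = enat k)"
proof -
  have "AE \<omega> in M. (cnt {t. I t \<omega>} = enat (Suc k) \<and> cnt {t. t < 0 \<and> I t \<omega>} = 0)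
      \<longleftrightarrow> (cnt {t. t < 0 \<and> I t \<omega>} = 0 \<and> cnt {t. 0 < t \<and> I t \<omega>} = enat k)"
    using I0 by eventually_elim (auto simp: cnt_split_at_0 eSuc_enat[symmetric])
  moreover have "{\<omega>\<in>space M. cnt {t. I t \<omega>} = enat (Suc k) \<and> cnt {t. t < 0 \<and> I t \<omega>} = 0} \<in> sets M"
    by measurable
  moreover have "{\<omega>\<in>space M. cnt {t. t < 0 \<and> I t \<omega>} = 0 \<and> cnt {t. 0 < t \<and> I t \<omega>} = enat k} \<in> sets M"
    by measurable
  ultimately show ?thesis
    by (rule prob_space.prob_eq_AE[OF M])
qed

lemma prob_total_cnt_ge:
  assumes M: "prob_space M" and [measurable]: "\<And>t. I t \<in> measurable M (count_space UNIV)"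
    and I0: "AE \<omega> in M. I 0 \<omega>"
  shows "\<P>(\<omega> in M. enat (Suc l) \<le> cnt {t. I t \<omega>} \<and> cnt {t. t < 0 \<and> I t \<omega>} = 0)
       = \<P>(\<omega> in M. cnt {t. t < 0 \<and> I t \<omega>} = 0 \<and> enat l \<le> cnt {t. 0 < t \<and> I t \<omega>})"
proof -
  have "AE \<omega> in M. (enat (Suc l) \<le> cnt {t. I t \<omega>} \<and> cnt {t. t < 0 \<and> I t \<omega>} = 0)
      \<longleftrightarrow> (cnt {t. t < 0 \<and> I t \<omega>} = 0 \<and> enat l \<le> cnt {t. 0 < t \<and> I t \<omega>})"
    using I0 by eventually_elim (auto simp: cnt_split_at_0 eSuc_enat[symmetric])
  moreover have "{\<omega>\<in>space M. enat (Suc l) \<le> cnt {t. I t \<omega>} \<and> cnt {t. t < 0 \<and> I t \<omega>} = 0} \<in> sets M"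
    by measurable
  moreover have "{\<omega>\<in>space M. cnt {t. t < 0 \<and> I t \<omega>} = 0 \<and> enat l \<le> cnt {t. 0 < t \<and> I t \<omega>}} \<in> sets M"
    by measurable
  ultimately show ?thesis
    by (rule prob_space.prob_eq_AE[OF M])
qed

theorem proposition4p1:
  fixes M :: "'a measure" and I :: "int \<Rightarrow> 'a \<Rightarrow> bool"
    and Mn :: "nat \<Rightarrow> 'b measure" and In :: "nat \<Rightarrow> int \<Rightarrow> 'b \<Rightarrow> bool"
    and \<theta> :: real and \<pi> :: "nat \<Rightarrow> real"
  assumes M: "prob_space M"
    and I_rv: "\<And>t. I t \<in> measurable M (count_space UNIV)"
    and Mn: "\<And>n. prob_space (Mn n)"
    and stat: "\<And>n. stationary_proc (Mn n) (In n)"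
    and pos: "\<And>n. measure (Mn n) {\<omega> \<in> space (Mn n). In n 0 \<omega>} > 0"
    and conv: "tail_fdd_conv Mn In M I"
    and theta_def: "\<theta> = measure M {\<omega> \<in> space M. cnt {t. t > 0 \<and> I t \<omega>} = 0}"
    and theta_pos: "\<theta> > 0"
    and pi_def: "\<And>k. \<pi> k =
        measure M {\<omega> \<in> space M. cnt {t. I t \<omega>} = enat k \<and> cnt {t. t < 0 \<and> I t \<omega>} = 0}
        / measure M {\<omega> \<in> space M. cnt {t. t < 0 \<and> I t \<omega>} = 0}"
  shows "\<theta> = measure M {\<omega> \<in> space M. \<forall>t>0. \<not> I t \<omega>}
     \<and> \<theta> = measure M {\<omega> \<in> space M. \<forall>t<0. \<not> I t \<omega>}
     \<and> (\<forall>k::nat. measure M {\<omega> \<in> space M. cnt {t. t > 0 \<and> I t \<omega>} = enat k}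
                = measure M {\<omega> \<in> space M. cnt {t. t < 0 \<and> I t \<omega>} = enat k})
     \<and> (\<forall>k::nat. k \<ge> 1 \<longrightarrow>
          \<pi> k = (1 / \<theta>) * (measure M {\<omega> \<in> space M. cnt {t. t > 0 \<and> I t \<omega>} = enat (k - 1)}
                          - measure M {\<omega> \<in> space M. cnt {t. t > 0 \<and> I t \<omega>} = enat k}))
     \<and> (\<forall>l::nat.
          measure M {\<omega> \<in> space M. cnt {t. t > 0 \<and> I t \<omega>} = enat l}
            = \<theta> * (measure M {\<omega> \<in> space M. enat (l + 1) \<le> cnt {t. I t \<omega>} \<and> cnt {t. t < 0 \<and> I t \<omega>} = 0}
                   / measure M {\<omega> \<in> space M. cnt {t. t < 0 \<and> I t \<omega>} = 0})
        \<and> measure M {\<omega> \<in> space M. cnt {t. t > 0 \<and> I t \<omega>} = enat l}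
            = \<theta> * (\<Sum>i. \<pi> (i + l + 1)))"
proof -
  have tc: "time_change M I"
    by (rule time_changeI_cylinder[OF M I_rv tail_fdd_conv_time_change_cylinder[OF conv stat]])
  have I0: "AE \<omega> in M. I 0 \<omega>"
    by (rule tail_fdd_conv_AE_at_0[OF conv M I_rv pos])
  interpret count_transfer M "\<lambda>\<omega>. cnt {t. t < 0 \<and> I t \<omega>}" "\<lambda>\<omega>. cnt {t. 0 < t \<and> I t \<omega>}"
    by (rule time_change_count_transfer[OF M I_rv tc I0])
  have theta_future: "\<theta> = \<P>(\<omega> in M. cnt {t. 0 < t \<and> I t \<omega>} = enat 0)"
    by (simp add: theta_def zero_enat_def)
  have theta_past: "\<theta> = \<P>(\<omega> in M. cnt {t. t < 0 \<and> I t \<omega>} = 0)"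
    using prob_X_eq_Y[of 0] theta_future by (simp add: zero_enat_def)
  have pi_eq: "\<pi> (Suc k) = joint 0 (enat k) / \<theta>" for k
    using pi_def[of "Suc k"] prob_total_cnt_eq[where I = I, OF M I_rv I0, of k] theta_past by simp
  show ?thesis
  proof (intro conjI allI impI)
    show "\<theta> = \<P>(\<omega> in M. \<forall>t>0. \<not> I t \<omega>)" "\<theta> = \<P>(\<omega> in M. \<forall>t<0. \<not> I t \<omega>)"
      using theta_def theta_past by (simp_all add: cnt_eq_0_iff)
    show "\<P>(\<omega> in M. cnt {t. t > 0 \<and> I t \<omega>} = enat k) = \<P>(\<omega> in M. cnt {t. t < 0 \<and> I t \<omega>} = enat k)" for k
      by (rule prob_X_eq_Y[symmetric])
    show "\<pi> k = (1 / \<theta>) * (\<P>(\<omega> in M. cnt {t. t > 0 \<and> I t \<omega>} = enat (k - 1))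
        - \<P>(\<omega> in M. cnt {t. t > 0 \<and> I t \<omega>} = enat k))" if "k \<ge> 1" for k
      using pi_eq[of "k - 1"] joint_0_eq_diff[of "k - 1"] that by simp
    fix l :: nat
    show "\<P>(\<omega> in M. cnt {t. t > 0 \<and> I t \<omega>} = enat l) = \<theta> * (\<P>(\<omega> in M. enat (l + 1) \<le> cnt {t. I t \<omega>}
        \<and> cnt {t. t < 0 \<and> I t \<omega>} = 0) / \<P>(\<omega> in M. cnt {t. t < 0 \<and> I t \<omega>} = 0))"
      using prob_total_cnt_ge[where I = I, OF M I_rv I0, of l] prob_Y_eq_prob_X_0_Y_ge[of l] theta_past theta_pos
      by (simp add: zero_enat_def)
    have "(\<lambda>i. \<pi> (i + l + 1)) sums (\<P>(\<omega> in M. cnt {t. 0 < t \<and> I t \<omega>} = enat l) / \<theta>)"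
      using sums_divide[OF sums_joint_Y[of l], of \<theta>] by (simp add: pi_eq add.commute)
    then show "\<P>(\<omega> in M. cnt {t. t > 0 \<and> I t \<omega>} = enat l) = \<theta> * (\<Sum>i. \<pi> (i + l + 1))"
      using theta_pos by (simp add: sums_iff)
  qed
qed

end
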